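(* Let $f:\{1,\dots,n\}\to\{0,1\}$, let $S=\{i: f(i)=1\}$, and let $T=f(1)f(2)\cdots f(n)$. Then the number $r$ of runs in the Burrows–Wheeler Transform of $T$ satisfies $r\le 2|S|+1$.
   Context: The Burrows–Wheeler Transform (BWT) of $T$ is the last column of the matrix whose rows are the cyclic rotations of $T$ sorted lexicographically; it is a permutation of the symbols of $T$. $r$ is the number of maximal runs of equal consecutive symbols in the BWT. *)

theory Defs
  imports Main "HOL-Library.List_Lexorder"
begin

text \<open>Cyclic rotations of a word, sorted lexicographically (lexicographic order on
  lists from List_Lexorder, symbols ordered by their own order); the BWT is the
  last column of this sorted matrix.\<close>

definition rotations :: "'a list \<Rightarrow> 'a list list" where
  "rotations T = map (\<lambda>i. rotate i T) [0..<length T]"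

definition bwt :: "'a::linorder list \<Rightarrow> 'a list" where
  "bwt T = map last (sort (rotations T))"

definition runs :: "'a list \<Rightarrow> nat" where
  "runs w = length (remdups_adj w)"

end

theory Submission
  imports Defs "HOL-Library.Multiset"
begin

text \<open>The BWT is a permutation of the word, so it contains exactly \<open>|S|\<close> ones. In a word over
  two letters every run of the second letter is followed by a run of the first one, or ends
  the word; so the runs of the second letter number at most one more than the runs of the
  first, which in turn number at most its count.\<close>

lemma runs_le_twice_count_plus_one:
  assumes "set w \<subseteq> {a, b}"
  shows "runs w \<le> 2 * count_list w a + 1"
proof -
  \<comment> \<open>A word starting with \<open>a\<close> has one run to spare.\<close>
  have "runs w + (if w \<noteq> [] \<and> hd w = a then 1 else 0) \<le> 2 * count_list w a + 1"
    using assms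
    by (induction w rule: remdups_adj.induct) (auto simp: runs_def split: if_splits)
  then show ?thesis by linarith
qed

lemma map_last_rotations: "map last (rotations T) = rotate (length T - 1) T"
proof (rule nth_equalityI)
  fix i
  assume "i < length (map last (rotations T))"
  then have i: "i < length T" by (simp add: rotations_def)
  have "last (rotate i T) = rotate i T ! (length T - 1)"
    using i by (metis last_conv_nth length_rotate list.size(3) not_less0)
  also have "\<dots> = T ! ((i + (length T - 1)) mod length T)"
    using i by (simp add: nth_rotate)
  finally have "last (rotate i T) = T ! ((i + (length T - 1)) mod length T)" .
  then show "map last (rotations T) ! i = rotate (length T - 1) T ! i"
    using i by (simp add: rotations_def nth_rotate add.commute)
qed (simp add: rotations_def)

lemma mset_rotate: "mset (rotate n xs) = mset xs"
  by (metis append_take_drop_id mset_append rotate_drop_take union_commute)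

lemma mset_bwt: "mset (bwt T) = mset T"
proof -
  have "mset (bwt T) = mset (map last (rotations T))"
    by (simp add: bwt_def)
  also have "\<dots> = mset T"
    by (simp only: map_last_rotations mset_rotate)
  finally show ?thesis .
qed

lemma count_list_map_upt:
  "count_list (map f [m..<n]) y = card {i \<in> {m..<n}. f i = y}"
proof -
  have "count_list (map f [m..<n]) y = length (filter (\<lambda>i. f i = y) [m..<n])"
    by (simp add: count_list_eq_length_filter filter_map comp_def eq_commute)
  also have "\<dots> = card {i \<in> {m..<n}. f i = y}"
    by (subst distinct_card[symmetric]) auto
  finally show ?thesis .
qed

theorem lemma12:
  fixes f :: "nat \<Rightarrow> nat" and n :: nat
  assumes "\<forall>i\<in>{1..n}. f i \<in> {0, 1}"
  shows "runs (bwt (map f [1..<n+1])) \<le> 2 * card {i \<in> {1..n}. f i = 1} + 1"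
proof -
  let ?T = "map f [1..<n+1]"
  have binary: "set (bwt ?T) \<subseteq> {1, 0}"
    using assms unfolding mset_eq_setD[OF mset_bwt] by (auto simp del: upt_Suc)
  have "count_list (bwt ?T) 1 = count_list ?T 1"
    by (rule mset_eq_length_filter[OF mset_bwt])
  also have "\<dots> = card {i \<in> {1..n}. f i = 1}"
    by (simp add: count_list_map_upt atLeastLessThanSuc_atLeastAtMost del: upt_Suc)
  finally show ?thesis
    using runs_le_twice_count_plus_one[OF binary] by simp
qed

end
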